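(* Let $\alpha\in(0,2)$ and $\alpha_0\in(0,\alpha\wedge1)$, and suppose $$\limsup_{|x|\to\infty}\bigg[\Big(\sup_{|z|\ge|x|}e^{-V(z)}\Big)|x|^{d+\alpha-\alpha_0}\bigg]=0.$$ Then there is $C_0>0$ such that for all $f\in C_b^\infty(\mathbb R^d)$, $$\int\big(f(x)-\mu_{2V}(f)\big)^2\frac{e^{V(x)}}{(1+|x|)^{d+\alpha}}\mu_{2V}(dx)\le C_0\iint\frac{(f(y)-f(x))^2}{|y-x|^{d+\alpha}}e^{-V(y)}dy\,e^{-V(x)}dx.$$
   Context: Let $d\ge1$. $V:\mathbb R^d\to\mathbb R$ is a locally bounded measurable function such that $e^{-V}$ is bounded and $\int e^{-V(x)}dx<\infty$. $\mu_{2V}(dx):=\frac{e^{-2V(x)}}{\int e^{-2V(y)}dy}dx$, $\mu_{2V}(f)=\int f\,d\mu_{2V}$. $C_b^\infty$ denotes smooth functions bounded with all derivatives. *)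

theory Defs
  imports "HOL-Analysis.Analysis"
begin

inductive_set iter_partials :: "('a::euclidean_space \<Rightarrow> real) \<Rightarrow> ('a \<Rightarrow> real) set"
  for f :: "'a \<Rightarrow> real" where
  base: "f \<in> iter_partials f"
| step: "g \<in> iter_partials f \<Longrightarrow> b \<in> Basis \<Longrightarrow>
          (\<lambda>x. frechet_derivative g (at x) b) \<in> iter_partials f"

definition Cb_inf :: "('a::euclidean_space \<Rightarrow> real) \<Rightarrow> bool" where
  "Cb_inf f \<longleftrightarrow> (\<forall>g \<in> iter_partials f. g differentiable_on UNIV \<and> bounded (range g))"

definition mu2V :: "('a::euclidean_space \<Rightarrow> real) \<Rightarrow> ('a \<Rightarrow> real) \<Rightarrow> real" where
  "mu2V V f = (\<integral>x. f x * exp (- 2 * V x) \<partial>lebesgue) / (\<integral>y. exp (- 2 * V y) \<partial>lebesgue)"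

end

theory Submission
  imports Defs
begin

(* Write rho = exp(-V), D = d + alpha and Z = integral of rho^2; then mu_2V(f) is the mean of f
   under rho^2/Z and the left-hand side is (1/Z) * integral of (f - mu)^2 (1+|x|)^-D rho.
   Let c be the rho-average of f over the unit ball B, m the rho-mass of B, and let the
   deviation A be the integral of (f - c)^2 (1+|x|)^-D rho.  The proof has three steps:
   (1) Cauchy-Schwarz on B gives m (f(x) - c)^2 <= integral over B of (f(x) - f(z))^2 rho(z) dz,
       and (1+|x|)^-D <= |z - x|^-D for z in B; integrating in x gives m A <= energy(f).
   (2) Cauchy-Schwarz with weight (1+|x|)^-D rho gives Z^2 (mu - c)^2 <= A * integral of
       rho^3 (1+|x|)^D, which is finite because the decay hypothesis bounds rho^2 (1+|x|)^D.
   (3) (f - mu)^2 <= 2 (f - c)^2 + 2 (c - mu)^2 bounds the left-hand side by a multiple of A. *)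

lemma quadratic_nonneg_discriminant:
  fixes a b c :: real
  assumes a: "a \<ge> 0" and q: "\<And>t. 0 \<le> t^2 * a - 2 * t * b + c"
  shows "b^2 \<le> a * c"
proof (cases "a = 0")
  case True
  show ?thesis
  proof (cases "b = 0")
    case False
    have "0 \<le> ((c + 1) / (2 * b))^2 * a - 2 * ((c + 1) / (2 * b)) * b + c" by (rule q)
    moreover have "2 * ((c + 1) / (2 * b)) * b = c + 1" using False by simp
    ultimately show ?thesis using True by simp
  qed (use True q[of 0] in simp)
next
  case False
  with a have ap: "a > 0" by simp
  have "0 \<le> (b / a)^2 * a - 2 * (b / a) * b + c" by (rule q)
  moreover have "(b / a)^2 * a = b^2 / a" using ap by (simp add: power2_eq_square)
  moreover have "2 * (b / a) * b = 2 * (b^2 / a)" by (simp add: power2_eq_square)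
  ultimately have "b^2 / a \<le> c" by linarith
  thus ?thesis using ap by (simp add: divide_le_eq mult.commute)
qed

text \<open>Cauchy--Schwarz with a positive weight:
  \<open>(\<integral>uv)\<^sup>2 \<le> (\<integral>u\<^sup>2w) (\<integral>v\<^sup>2/w)\<close>, obtained from the nonnegativity of
  \<open>\<integral>(tuw - v)\<^sup>2/w\<close> for every real \<open>t\<close>.\<close>
lemma cauchy_schwarz_weighted:
  fixes u v w :: "'b \<Rightarrow> real"
  assumes w: "\<And>x. 0 < w x"
    and i1: "integrable M (\<lambda>x. u x^2 * w x)" and i2: "integrable M (\<lambda>x. v x^2 / w x)"
    and i3: "integrable M (\<lambda>x. u x * v x)"
  shows "(\<integral>x. u x * v x \<partial>M)^2 \<le> (\<integral>x. u x^2 * w x \<partial>M) * (\<integral>x. v x^2 / w x \<partial>M)"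
proof (rule quadratic_nonneg_discriminant)
  show "0 \<le> (\<integral>x. u x^2 * w x \<partial>M)"
    using w by (intro integral_nonneg_AE AE_I2) (simp add: less_imp_le)
  fix t :: real
  have square: "t^2 * (u x^2 * w x) - 2 * t * (u x * v x) + v x^2 / w x = (t * u x * w x - v x)^2 / w x"
    for x using w[of x] by (simp add: field_simps power2_eq_square)
  have "0 \<le> (\<integral>x. (t * u x * w x - v x)^2 / w x \<partial>M)"
    using w by (intro integral_nonneg_AE AE_I2) (simp add: less_imp_le)
  also have "\<dots> = (\<integral>x. t^2 * (u x^2 * w x) - 2 * t * (u x * v x) + v x^2 / w x \<partial>M)"
    by (simp only: square)
  also have "\<dots> = t^2 * (\<integral>x. u x^2 * w x \<partial>M) - 2 * t * (\<integral>x. u x * v x \<partial>M) + (\<integral>x. v x^2 / w x \<partial>M)"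
    using i1 i2 i3 by simp
  finally show "0 \<le> t^2 * (\<integral>x. u x^2 * w x \<partial>M) - 2 * t * (\<integral>x. u x * v x \<partial>M) + (\<integral>x. v x^2 / w x \<partial>M)" .
qed

lemma square_diff_le_triangle:
  fixes a b c :: real
  shows "(a - b)^2 \<le> 2 * (a - c)^2 + 2 * (c - b)^2"
proof -
  have "2 * (a - c)^2 + 2 * (c - b)^2 - (a - b)^2 = (a - 2 * c + b)^2"
    by (simp add: power2_eq_square algebra_simps)
  thus ?thesis using zero_le_power2[of "a - 2 * c + b"] by linarith
qed

lemma integral_pos_if_pos_on:
  fixes g :: "'b \<Rightarrow> real"
  assumes g: "integrable M g" and nn: "\<And>x. 0 \<le> g x" and N: "N \<in> sets M" and NM: "emeasure M N \<noteq> 0"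
    and pos: "\<And>x. x \<in> N \<Longrightarrow> 0 < g x"
  shows "0 < integral\<^sup>L M g"
proof -
  have "integral\<^sup>L M g \<noteq> 0"
  proof
    assume "integral\<^sup>L M g = 0"
    hence "AE x in M. g x = 0" using integral_nonneg_eq_0_iff_AE[OF g] nn by simp
    hence "AE x in M. x \<notin> N" by eventually_elim (use pos in force)
    hence "emeasure M N = 0"
      by (subst AE_iff_measurable[OF N, symmetric]) (use sets.sets_into_space[OF N] in auto)
    with NM show False by simp
  qed
  moreover have "0 \<le> integral\<^sup>L M g" by (intro integral_nonneg_AE AE_I2) (use nn in auto)
  ultimately show ?thesis by simp
qed

text \<open>The decay hypothesis in the form used below: if the tail supremum of a bounded nonnegative
  \<open>g\<close> beyond radius \<open>|x|\<close>, times \<open>|x|\<^sup>p\<close>, tends to \<open>0\<close> and \<open>D \<le> 2p\<close>, then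
  \<open>g(x)\<^sup>2 (1+|x|)\<^sup>D\<close> is bounded (use \<open>g(x) |x|\<^sup>D\<^sup>/\<^sup>2 \<le> 1\<close> far out).\<close>
lemma decay_imp_weighted_square_bounded:
  fixes g :: "'a::real_normed_vector \<Rightarrow> real" and p D :: real
  assumes g_nonneg: "\<And>x. 0 \<le> g x" and g_bdd: "\<And>x. g x \<le> M"
    and D: "0 \<le> D" "D \<le> 2 * p"
    and decay: "Limsup at_infinity (\<lambda>x::'a. ereal ((SUP z\<in>{z. norm z \<ge> norm x}. g z) * norm x powr p)) = 0"
  shows "\<exists>C. \<forall>x. g x ^ 2 * (1 + norm x) powr D \<le> C"
proof -
  have "\<forall>\<^sub>F x::'a in at_infinity. ereal ((SUP z\<in>{z. norm z \<ge> norm x}. g z) * norm x powr p) < 1"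
    by (rule Limsup_lessD) (simp add: decay)
  then obtain b where b: "\<And>x::'a. b \<le> norm x \<Longrightarrow> (SUP z\<in>{z. norm z \<ge> norm x}. g z) * norm x powr p < 1"
    unfolding eventually_at_infinity by auto
  define R where "R = max b 1"
  have far: "g x ^ 2 * (1 + norm x) powr D \<le> 2 powr D" if "R \<le> norm x" for x
  proof -
    have x1: "1 \<le> norm x" and xb: "b \<le> norm x" using that by (auto simp: R_def)
    have "g x \<le> (SUP z\<in>{z. norm z \<ge> norm x}. g z)"
      by (rule cSUP_upper) (use g_bdd in \<open>auto simp: bdd_above_def\<close>)
    hence "g x * norm x powr (D / 2) \<le> (SUP z\<in>{z. norm z \<ge> norm x}. g z) * norm x powr p"
      using x1 D g_nonneg[of x] by (intro mult_mono powr_mono) auto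
    also have "\<dots> < 1" using b[OF xb] .
    finally have small: "g x * norm x powr (D / 2) \<le> 1" by simp
    have "(1 + norm x) powr D \<le> (2 * norm x) powr D" using x1 D by (intro powr_mono2) auto
    also have "\<dots> = 2 powr D * (norm x powr (D / 2))^2"
      by (simp add: powr_mult power2_eq_square powr_add[symmetric])
    finally have "g x ^ 2 * (1 + norm x) powr D \<le> g x ^ 2 * (2 powr D * (norm x powr (D / 2))^2)"
      by (rule mult_left_mono) simp
    also have "\<dots> = 2 powr D * (g x * norm x powr (D / 2))^2"
      by (simp add: power_mult_distrib)
    also have "\<dots> \<le> 2 powr D * 1"
      using small g_nonneg[of x] by (intro mult_left_mono power_le_one) auto
    finally show ?thesis by simp
  qed
  have near: "g x ^ 2 * (1 + norm x) powr D \<le> M^2 * (1 + R) powr D" if "norm x \<le> R" for x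
  proof (rule mult_mono)
    show "g x ^ 2 \<le> M ^ 2" using g_nonneg[of x] g_bdd[of x] by (intro power_mono) auto
    show "(1 + norm x) powr D \<le> (1 + R) powr D" using that D by (intro powr_mono2) auto
  qed auto
  have "0 \<le> 2 powr D" "0 \<le> M^2 * (1 + R) powr D" by auto
  hence "g x ^ 2 * (1 + norm x) powr D \<le> 2 powr D + M^2 * (1 + R) powr D" for x
    using far[of x] near[of x] by linarith
  thus ?thesis by blast
qed


locale poincare_density =
  fixes \<rho> :: "'a::euclidean_space \<Rightarrow> real" and D :: real
  assumes \<rho>_meas: "\<rho> \<in> borel_measurable lebesgue"
    and \<rho>_pos: "\<And>x. 0 < \<rho> x"
    and \<rho>_bdd: "\<exists>M. \<forall>x. \<rho> x \<le> M"
    and \<rho>_int: "integrable lebesgue \<rho>"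
    and D_pos: "0 < D"
    and tail_bdd: "\<exists>C. \<forall>x. \<rho> x ^ 2 * (1 + norm x) powr D \<le> C"
begin

definition decay_weight :: "'a \<Rightarrow> real" where
  "decay_weight x = 1 / (1 + norm x) powr D"

definition Z :: real where
  "Z = (\<integral>y. \<rho> y ^ 2 \<partial>lebesgue)"

definition mean :: "('a \<Rightarrow> real) \<Rightarrow> real" where
  "mean f = (\<integral>x. f x * \<rho> x ^ 2 \<partial>lebesgue) / Z"

definition ball_mass :: real where
  "ball_mass = (\<integral>z. indicator (ball 0 1) z * \<rho> z \<partial>lebesgue)"

definition ball_mean :: "('a \<Rightarrow> real) \<Rightarrow> real" where
  "ball_mean f = (\<integral>z. indicator (ball 0 1) z * f z * \<rho> z \<partial>lebesgue) / ball_mass"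

definition deviation :: "('a \<Rightarrow> real) \<Rightarrow> real" where
  "deviation f = (\<integral>x. (f x - ball_mean f)^2 * decay_weight x * \<rho> x \<partial>lebesgue)"

definition energy :: "('a \<Rightarrow> real) \<Rightarrow> ennreal" where
  "energy f = (\<integral>\<^sup>+ x. (\<integral>\<^sup>+ y. ennreal ((f y - f x)\<^sup>2 / norm (y - x) powr D * \<rho> y) \<partial>lebesgue)
                 * ennreal (\<rho> x) \<partial>lebesgue)"

definition tail_moment :: real where
  "tail_moment = (\<integral>y. \<rho> y ^ 3 * (1 + norm y) powr D \<partial>lebesgue)"

definition weight_mass :: real where
  "weight_mass = (\<integral>y. decay_weight y * \<rho> y \<partial>lebesgue)"

lemma norm_lebesgue_measurable: "(\<lambda>x::'a. norm x) \<in> borel_measurable lebesgue"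
  by (simp add: borel_measurable_continuous_onI measurable_completion)

lemma unit_ball_lebesgue: "ball (0::'a) 1 \<in> sets lebesgue"
  by (simp add: fmeasurableD lmeasurable_ball)

lemmas measurable_intros = borel_measurable_times borel_measurable_add borel_measurable_diff
  borel_measurable_divide borel_measurable_power powr_real_measurable borel_measurable_const
  borel_measurable_indicator[OF unit_ball_lebesgue] norm_lebesgue_measurable \<rho>_meas

lemma decay_weight_measurable: "decay_weight \<in> borel_measurable lebesgue"
  unfolding decay_weight_def[abs_def] by (intro measurable_intros)

lemma \<rho>_nonzero: "\<rho> x \<noteq> 0"
  using \<rho>_pos[of x] by simp

lemma decay_weight_pos: "0 < decay_weight x"
proof -
  have "1 + norm x \<noteq> 0" using norm_ge_zero[of x] by linarith
  thus ?thesis by (simp add: decay_weight_def)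
qed

lemma decay_weight_le_one: "decay_weight x \<le> 1"
proof -
  have "1 \<le> (1 + norm x) powr D" using D_pos by (intro ge_one_powr_ge_zero) auto
  thus ?thesis by (simp add: decay_weight_def divide_le_eq_1)
qed

lemma integrable_dominated:
  assumes "g \<in> borel_measurable lebesgue" and "\<And>x. \<bar>g x\<bar> \<le> C * \<rho> x"
  shows "integrable lebesgue g"
proof (rule Bochner_Integration.integrable_bound)
  show "integrable lebesgue (\<lambda>x. C * \<rho> x)" using \<rho>_int by simp
  show "AE x in lebesgue. norm (g x) \<le> norm (C * \<rho> x)"
    using assms(2) by (intro AE_I2) (metis abs_ge_self order_trans real_norm_def)
qed fact

lemma integrable_bounded_times_density:
  assumes "g \<in> borel_measurable lebesgue" and "\<And>x. \<bar>g x\<bar> \<le> C"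
  shows "integrable lebesgue (\<lambda>x. g x * \<rho> x)"
proof (rule integrable_dominated[where C=C])
  show "(\<lambda>x. g x * \<rho> x) \<in> borel_measurable lebesgue" using assms(1) by (intro measurable_intros)
  show "\<bar>g x * \<rho> x\<bar> \<le> C * \<rho> x" for x
    using assms(2)[of x] \<rho>_pos[of x] by (simp add: abs_mult mult_right_mono)
qed

lemma integrable_\<rho>_square: "integrable lebesgue (\<lambda>y. \<rho> y ^ 2)"
proof -
  obtain M where M: "\<And>x. \<rho> x \<le> M" using \<rho>_bdd by blast
  show ?thesis
  proof (rule integrable_dominated[where C=M])
    show "(\<lambda>y. \<rho> y ^ 2) \<in> borel_measurable lebesgue" by (intro measurable_intros)
    show "\<bar>\<rho> x ^ 2\<bar> \<le> M * \<rho> x" for x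
      using \<rho>_pos[of x] M[of x] by (simp add: power2_eq_square mult_right_mono)
  qed
qed

lemma integrable_ball_density: "integrable lebesgue (\<lambda>z. indicator (ball 0 1) z * \<rho> z)"
proof (rule integrable_dominated[where C=1])
  show "(\<lambda>z. indicator (ball 0 1) z * \<rho> z) \<in> borel_measurable lebesgue" by (intro measurable_intros)
  show "\<bar>indicator (ball 0 1) x * \<rho> x\<bar> \<le> 1 * \<rho> x" for x
    using \<rho>_pos[of x] by (simp add: indicator_def)
qed

lemma integrable_tail_moment: "integrable lebesgue (\<lambda>y. \<rho> y ^ 3 * (1 + norm y) powr D)"
proof -
  obtain C where C: "\<And>x. \<rho> x ^ 2 * (1 + norm x) powr D \<le> C" using tail_bdd by blast
  show ?thesis
  proof (rule integrable_dominated[where C=C])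
    show "(\<lambda>y. \<rho> y ^ 3 * (1 + norm y) powr D) \<in> borel_measurable lebesgue" by (intro measurable_intros)
    fix x
    have "\<rho> x ^ 3 * (1 + norm x) powr D = (\<rho> x ^ 2 * (1 + norm x) powr D) * \<rho> x"
      by (simp add: power2_eq_square power3_eq_cube)
    also have "\<dots> \<le> C * \<rho> x" using C[of x] \<rho>_pos[of x] by (intro mult_right_mono) auto
    finally show "\<bar>\<rho> x ^ 3 * (1 + norm x) powr D\<bar> \<le> C * \<rho> x" using \<rho>_pos[of x] by simp
  qed
qed

lemma integrable_weight: "integrable lebesgue (\<lambda>y. decay_weight y * \<rho> y)"
  by (rule integrable_bounded_times_density[where C=1])
     (auto intro: decay_weight_measurable simp: less_imp_le decay_weight_pos decay_weight_le_one)

text \<open>Both normalising constants are positive since \<open>\<rho> > 0\<close> and the unit ball has positive volume.\<close>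
lemma Z_pos: "0 < Z"
  unfolding Z_def
  by (rule integral_pos_if_pos_on[OF integrable_\<rho>_square, where N=UNIV]) (auto simp: \<rho>_pos \<rho>_nonzero less_imp_le)

lemma ball_mass_pos: "0 < ball_mass"
proof -
  have "emeasure lebesgue (ball (0::'a) 1) = emeasure lborel (ball (0::'a) 1)"
    by (simp add: emeasure_completion)
  also have "\<dots> \<noteq> 0"
  proof -
    have "0 < unit_ball_vol (real DIM('a))" by simp
    hence vol: "unit_ball_vol (real DIM('a)) \<noteq> 0" by linarith
    show ?thesis by (simp add: emeasure_ball vol)
  qed
  finally show ?thesis unfolding ball_mass_def
    by (intro integral_pos_if_pos_on[OF integrable_ball_density _ unit_ball_lebesgue])
       (auto simp: \<rho>_pos less_imp_le indicator_def)
qed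

lemma tail_moment_nonneg: "0 \<le> tail_moment"
  unfolding tail_moment_def using \<rho>_pos by (simp add: integral_nonneg_AE less_imp_le)

lemma weight_mass_nonneg: "0 \<le> weight_mass"
  unfolding weight_mass_def using \<rho>_pos decay_weight_pos by (simp add: integral_nonneg_AE less_imp_le)

definition poincare_constant :: real where
  "poincare_constant = (2 / Z + 2 * tail_moment * weight_mass / Z ^ 3) / ball_mass"

lemma poincare_constant_pos: "0 < poincare_constant"
  unfolding poincare_constant_def using Z_pos ball_mass_pos tail_moment_nonneg weight_mass_nonneg
  by (intro divide_pos_pos add_pos_nonneg) auto

text \<open>Kernel comparison: for \<open>z\<close> in the unit ball \<open>|z - x| \<le> 1 + |x|\<close>, so the weight
  \<open>(1+|x|)\<^sup>-\<^sup>D\<close> is dominated by the jump kernel \<open>|z - x|\<^sup>-\<^sup>D\<close>.\<close>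
lemma ball_term_le_kernel_term:
  "indicator (ball 0 1) z * (f x - f z)^2 * \<rho> z * decay_weight x
     \<le> (f z - f x)^2 / norm (z - x) powr D * \<rho> z"
proof (cases "z \<in> ball 0 1 \<and> z \<noteq> x")
  case True
  have "norm (z - x) \<le> norm z + norm x" by (rule norm_triangle_ineq4)
  also have "\<dots> \<le> 1 + norm x" using True by simp
  finally have "norm (z - x) powr D \<le> (1 + norm x) powr D" using D_pos by (intro powr_mono2) auto
  moreover have "0 < norm (z - x) powr D" using True by simp
  ultimately have "decay_weight x \<le> 1 / norm (z - x) powr D" unfolding decay_weight_def
    by (intro divide_left_mono mult_pos_pos) auto
  hence "(f z - f x)^2 * \<rho> z * decay_weight x \<le> (f z - f x)^2 * \<rho> z * (1 / norm (z - x) powr D)"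
    using \<rho>_pos[of z] by (intro mult_left_mono) auto
  thus ?thesis using True by (simp add: power2_commute)
next
  case False
  hence "indicator (ball 0 1) z * (f x - f z)^2 * \<rho> z * decay_weight x = 0"
    by (auto simp: indicator_def)
  moreover have "0 \<le> (f z - f x)^2 / norm (z - x) powr D * \<rho> z"
    using \<rho>_pos[of z] by simp
  ultimately show ?thesis by linarith
qed

context
  fixes f :: "'a \<Rightarrow> real"
  assumes f_meas: "f \<in> borel_measurable lebesgue" and f_bdd: "bounded (range f)"
begin

lemma f_abs_bound: obtains F where "\<And>x. \<bar>f x\<bar> \<le> F"
  using f_bdd unfolding bounded_iff by (metis rangeI real_norm_def)

lemma integrable_ball_f: "integrable lebesgue (\<lambda>z. indicator (ball 0 1) z * f z * \<rho> z)"
proof -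
  obtain F where F: "\<And>x. \<bar>f x\<bar> \<le> F" using f_abs_bound by blast
  have "\<bar>indicator (ball 0 1) z * f z\<bar> \<le> F" for z
    using F[of z] abs_ge_zero[of "f z"] by (auto simp: indicator_def)
  thus ?thesis by (intro integrable_bounded_times_density measurable_intros f_meas)
qed

lemma integrable_ball_square: "integrable lebesgue (\<lambda>z. indicator (ball 0 1) z * (a - f z)^2 * \<rho> z)"
proof -
  obtain F where F: "\<And>x. \<bar>f x\<bar> \<le> F" using f_abs_bound by blast
  have "\<bar>indicator (ball 0 1) z * (a - f z)^2\<bar> \<le> (\<bar>a\<bar> + F)^2" for z
  proof -
    have "\<bar>a - f z\<bar> \<le> \<bar>a\<bar> + F" using F[of z] by linarith
    hence "\<bar>a - f z\<bar>^2 \<le> (\<bar>a\<bar> + F)^2" by (intro power_mono) auto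
    thus ?thesis by (simp add: indicator_def)
  qed
  thus ?thesis
    by (intro integrable_bounded_times_density[where C="(\<bar>a\<bar> + F)^2"] measurable_intros f_meas)
qed

lemma integrable_deviation:
  "integrable lebesgue (\<lambda>x. (f x - ball_mean f)^2 * decay_weight x * \<rho> x)"
proof -
  obtain F where F: "\<And>x. \<bar>f x\<bar> \<le> F" using f_abs_bound by blast
  have "\<bar>(f x - ball_mean f)^2 * decay_weight x\<bar> \<le> (F + \<bar>ball_mean f\<bar>)^2" for x
  proof -
    have "\<bar>f x - ball_mean f\<bar> \<le> F + \<bar>ball_mean f\<bar>" using F[of x] by linarith
    hence "\<bar>f x - ball_mean f\<bar>^2 \<le> (F + \<bar>ball_mean f\<bar>)^2" by (intro power_mono) auto
    moreover have "(f x - ball_mean f)^2 * decay_weight x \<le> (f x - ball_mean f)^2"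
      using decay_weight_le_one[of x] by (intro mult_left_le) auto
    ultimately show ?thesis using decay_weight_pos[of x] by simp
  qed
  thus ?thesis
    by (intro integrable_bounded_times_density measurable_intros f_meas decay_weight_measurable)
qed

lemma integrable_f_\<rho>_square: "integrable lebesgue (\<lambda>x. f x * \<rho> x ^ 2)"
proof -
  obtain F where F: "\<And>x. \<bar>f x\<bar> \<le> F" using f_abs_bound by blast
  obtain M where M: "\<And>x. \<rho> x \<le> M" using \<rho>_bdd by blast
  have "\<bar>f x * \<rho> x\<bar> \<le> F * M" for x
    using F[of x] M[of x] \<rho>_pos[of x] by (simp add: abs_mult mult_mono)
  hence "integrable lebesgue (\<lambda>x. f x * \<rho> x * \<rho> x)"
    by (intro integrable_bounded_times_density measurable_intros f_meas)
  thus ?thesis by (simp add: power2_eq_square mult.assoc)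
qed

text \<open>Step (1a), Cauchy--Schwarz on the unit ball: the ball average of \<open>f\<close> satisfies
  \<open>m (a - c)\<^sup>2 \<le> \<integral>\<^sub>B (a - f z)\<^sup>2 \<rho>(z) dz\<close> for every real \<open>a\<close>.\<close>
lemma ball_mean_sq_le:
  "ball_mass * (a - ball_mean f)^2 \<le> (\<integral>z. indicator (ball 0 1) z * (a - f z)^2 * \<rho> z \<partial>lebesgue)"
proof -
  let ?B = "indicator (ball (0::'a) 1) :: 'a \<Rightarrow> real"
  let ?u = "\<lambda>z. ?B z * (a - f z)" and ?v = "\<lambda>z. ?B z * \<rho> z"
  have uv: "(\<lambda>z. ?u z * ?v z) = (\<lambda>z. a * (?B z * \<rho> z) - ?B z * f z * \<rho> z)"
    by (auto simp: indicator_def fun_eq_iff algebra_simps)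
  have u2: "(\<lambda>z. ?u z^2 * \<rho> z) = (\<lambda>z. ?B z * (a - f z)^2 * \<rho> z)"
    by (auto simp: indicator_def fun_eq_iff power2_eq_square)
  have v2: "(\<lambda>z. ?v z^2 / \<rho> z) = (\<lambda>z. ?B z * \<rho> z)"
    using \<rho>_nonzero by (auto simp: indicator_def fun_eq_iff power2_eq_square)
  have "(\<integral>z. ?u z * ?v z \<partial>lebesgue) = (\<integral>z. a * (?B z * \<rho> z) \<partial>lebesgue) - (\<integral>z. ?B z * f z * \<rho> z \<partial>lebesgue)"
    unfolding uv by (intro Bochner_Integration.integral_diff integrable_mult_right integrable_ball_density integrable_ball_f)
  also have "\<dots> = ball_mass * (a - ball_mean f)"
    using ball_mass_pos by (simp add: ball_mass_def ball_mean_def field_simps)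
  finally have "(ball_mass * (a - ball_mean f))^2 = (\<integral>z. ?u z * ?v z \<partial>lebesgue)^2"
    by simp
  also have "\<dots> \<le> (\<integral>z. ?u z^2 * \<rho> z \<partial>lebesgue) * (\<integral>z. ?v z^2 / \<rho> z \<partial>lebesgue)"
    by (rule cauchy_schwarz_weighted[OF \<rho>_pos])
       (simp_all add: u2 v2 uv integrable_ball_square integrable_ball_density integrable_ball_f)
  also have "\<dots> = (\<integral>z. ?B z * (a - f z)^2 * \<rho> z \<partial>lebesgue) * ball_mass"
    by (simp only: u2 v2 ball_mass_def)
  finally have "ball_mass * (ball_mass * (a - ball_mean f)^2)
      \<le> ball_mass * (\<integral>z. ?B z * (a - f z)^2 * \<rho> z \<partial>lebesgue)"
    by (simp add: power2_eq_square algebra_simps)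
  thus ?thesis using ball_mass_pos by simp
qed

lemma ball_deviation_le_kernel_integral:
  "ennreal (ball_mass * (f x - ball_mean f)^2 * decay_weight x)
     \<le> (\<integral>\<^sup>+ y. ennreal ((f y - f x)^2 / norm (y - x) powr D * \<rho> y) \<partial>lebesgue)"
proof -
  let ?g = "\<lambda>z. indicator (ball 0 1) z * (f x - f z)^2 * \<rho> z * decay_weight x"
  have "ball_mass * (f x - ball_mean f)^2 * decay_weight x
      \<le> (\<integral>z. indicator (ball 0 1) z * (f x - f z)^2 * \<rho> z \<partial>lebesgue) * decay_weight x"
    using ball_mean_sq_le[of "f x"] decay_weight_pos[of x] by (intro mult_right_mono) auto
  also have "\<dots> = integral\<^sup>L lebesgue ?g" by simp
  finally have "ennreal (ball_mass * (f x - ball_mean f)^2 * decay_weight x) \<le> ennreal (integral\<^sup>L lebesgue ?g)"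
    by (rule ennreal_leI)
  also have "\<dots> = (\<integral>\<^sup>+ z. ennreal (?g z) \<partial>lebesgue)"
    using \<rho>_pos decay_weight_pos
    by (intro nn_integral_eq_integral[symmetric] integrable_mult_left integrable_ball_square AE_I2)
       (simp add: indicator_def less_imp_le)
  also have "\<dots> \<le> (\<integral>\<^sup>+ y. ennreal ((f y - f x)^2 / norm (y - x) powr D * \<rho> y) \<partial>lebesgue)"
    by (intro nn_integral_mono ennreal_leI ball_term_le_kernel_term)
  finally show ?thesis .
qed

lemma ball_mass_deviation_le_energy: "ennreal (ball_mass * deviation f) \<le> energy f"
proof -
  let ?d = "\<lambda>x. (f x - ball_mean f)^2 * decay_weight x * \<rho> x"
  have "ennreal (ball_mass * deviation f) = ennreal (\<integral>x. ball_mass * ?d x \<partial>lebesgue)"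
    by (simp add: deviation_def)
  also have "\<dots> = (\<integral>\<^sup>+ x. ennreal (ball_mass * ?d x) \<partial>lebesgue)"
    using \<rho>_pos decay_weight_pos ball_mass_pos
    by (intro nn_integral_eq_integral[symmetric] integrable_mult_right integrable_deviation AE_I2)
       (simp add: less_imp_le)
  also have "\<dots> = (\<integral>\<^sup>+ x. ennreal (ball_mass * (f x - ball_mean f)^2 * decay_weight x) * ennreal (\<rho> x) \<partial>lebesgue)"
    using \<rho>_pos by (intro nn_integral_cong) (simp add: ennreal_mult''[symmetric] less_imp_le mult.assoc)
  also have "\<dots> \<le> energy f"
    unfolding energy_def by (intro nn_integral_mono mult_right_mono ball_deviation_le_kernel_integral) simp
  finally show ?thesis .
qed

text \<open>Step (2), Cauchy--Schwarz with weight \<open>(1+|x|)\<^sup>-\<^sup>D \<rho>\<close>: the ball average and the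
  \<open>\<rho>\<^sup>2\<close>-mean of \<open>f\<close> differ by at most a multiple of the deviation.\<close>
lemma mean_shift_sq_le: "(ball_mean f - mean f)^2 \<le> deviation f * tail_moment / Z^2"
proof -
  let ?c = "ball_mean f"
  have shift: "(\<lambda>x. (f x - ?c) * \<rho> x ^ 2) = (\<lambda>x. f x * \<rho> x ^ 2 - ?c * \<rho> x ^ 2)"
    by (simp add: fun_eq_iff algebra_simps)
  have "mean f - ?c = (\<integral>x. (f x - ?c) * \<rho> x ^ 2 \<partial>lebesgue) / Z"
    unfolding shift using integrable_f_\<rho>_square integrable_\<rho>_square Z_pos
    by (simp add: mean_def Z_def field_simps)
  hence "(?c - mean f)^2 = (\<integral>x. (f x - ?c) * \<rho> x ^ 2 \<partial>lebesgue)^2 / Z^2"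
    by (metis power2_commute power_divide)
  also have "\<dots> \<le> deviation f * tail_moment / Z^2"
  proof (rule divide_right_mono)
    have dev: "(\<lambda>x. (f x - ?c)^2 * (decay_weight x * \<rho> x)) = (\<lambda>x. (f x - ?c)^2 * decay_weight x * \<rho> x)"
      by (simp add: fun_eq_iff mult.assoc)
    have tail: "(\<lambda>x. (\<rho> x ^ 2)^2 / (decay_weight x * \<rho> x)) = (\<lambda>x. \<rho> x ^ 3 * (1 + norm x) powr D)"
    proof (rule ext)
      fix x :: 'a
      have "0 < (1 + norm x) powr D" using decay_weight_pos[of x] by (simp add: decay_weight_def)
      thus "(\<rho> x ^ 2)^2 / (decay_weight x * \<rho> x) = \<rho> x ^ 3 * (1 + norm x) powr D"
        using \<rho>_nonzero[of x] by (simp add: decay_weight_def field_simps power2_eq_square power3_eq_cube)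
    qed
    show "(\<integral>x. (f x - ?c) * \<rho> x ^ 2 \<partial>lebesgue)^2 \<le> deviation f * tail_moment"
      using cauchy_schwarz_weighted[of "\<lambda>x. decay_weight x * \<rho> x" lebesgue "\<lambda>x. f x - ?c" "\<lambda>x. \<rho> x ^ 2"]
      unfolding dev tail deviation_def tail_moment_def shift
      by (simp add: decay_weight_pos \<rho>_pos integrable_deviation integrable_tail_moment
          integrable_f_\<rho>_square integrable_\<rho>_square)
  qed simp
  finally show ?thesis .
qed

text \<open>Step (3): \<open>(f - \<mu>)\<^sup>2 \<le> 2(f - c)\<^sup>2 + 2(c - \<mu>)\<^sup>2\<close> and step (2) bound the weighted
  variance by a multiple of the deviation.\<close>
lemma weighted_variance_le_deviation:
  "(\<integral>\<^sup>+ x. ennreal ((f x - mean f)^2 * decay_weight x * \<rho> x / Z) \<partial>lebesgue)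
     \<le> ennreal ((2 / Z + 2 * tail_moment * weight_mass / Z ^ 3) * deviation f)"
proof -
  let ?c = "ball_mean f" and ?\<mu> = "mean f"
  let ?h = "\<lambda>x. 2 / Z * ((f x - ?c)^2 * decay_weight x * \<rho> x) + 2 * (?c - ?\<mu>)^2 / Z * (decay_weight x * \<rho> x)"
  have "(\<integral>\<^sup>+ x. ennreal ((f x - ?\<mu>)^2 * decay_weight x * \<rho> x / Z) \<partial>lebesgue) \<le> (\<integral>\<^sup>+ x. ennreal (?h x) \<partial>lebesgue)"
  proof (intro nn_integral_mono ennreal_leI)
    fix x
    have "0 \<le> decay_weight x * \<rho> x / Z"
      using decay_weight_pos[of x] \<rho>_pos[of x] Z_pos by simp
    hence "(f x - ?\<mu>)^2 * (decay_weight x * \<rho> x / Z) \<le> (2 * (f x - ?c)^2 + 2 * (?c - ?\<mu>)^2) * (decay_weight x * \<rho> x / Z)"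
      by (intro mult_right_mono square_diff_le_triangle)
    thus "(f x - ?\<mu>)^2 * decay_weight x * \<rho> x / Z \<le> ?h x"
      by (simp add: divide_inverse algebra_simps)
  qed
  also have "\<dots> = ennreal (2 / Z * deviation f + 2 * (?c - ?\<mu>)^2 / Z * weight_mass)"
  proof -
    have "integrable lebesgue ?h" using integrable_deviation integrable_weight by simp
    hence "(\<integral>\<^sup>+ x. ennreal (?h x) \<partial>lebesgue) = ennreal (integral\<^sup>L lebesgue ?h)"
      using decay_weight_pos \<rho>_pos Z_pos
      by (intro nn_integral_eq_integral AE_I2) (auto intro!: add_nonneg_nonneg mult_nonneg_nonneg simp: less_imp_le)
    thus ?thesis using integrable_deviation integrable_weight by (simp add: deviation_def weight_mass_def)
  qed
  also have "\<dots> \<le> ennreal ((2 / Z + 2 * tail_moment * weight_mass / Z ^ 3) * deviation f)"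
  proof (rule ennreal_leI)
    have "2 * (?c - ?\<mu>)^2 / Z * weight_mass \<le> 2 * (deviation f * tail_moment / Z^2) / Z * weight_mass"
      using mean_shift_sq_le Z_pos weight_mass_nonneg
      by (intro mult_right_mono divide_right_mono mult_left_mono) auto
    also have "\<dots> = 2 * tail_moment * weight_mass / Z ^ 3 * deviation f"
      using Z_pos by (simp add: field_simps power2_eq_square power3_eq_cube)
    finally show "2 / Z * deviation f + 2 * (?c - ?\<mu>)^2 / Z * weight_mass
        \<le> (2 / Z + 2 * tail_moment * weight_mass / Z ^ 3) * deviation f"
      by (simp add: algebra_simps)
  qed
  finally show ?thesis .
qed

theorem weighted_poincare:
  "(\<integral>\<^sup>+ x. ennreal ((f x - mean f)^2 * decay_weight x * \<rho> x / Z) \<partial>lebesgue)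
     \<le> ennreal poincare_constant * energy f"
proof -
  have dev_nonneg: "0 \<le> deviation f"
    unfolding deviation_def using decay_weight_pos \<rho>_pos by (simp add: integral_nonneg_AE less_imp_le)
  have "(2 / Z + 2 * tail_moment * weight_mass / Z ^ 3) * deviation f
      = poincare_constant * (ball_mass * deviation f)"
    using ball_mass_pos by (simp add: poincare_constant_def)
  hence "ennreal ((2 / Z + 2 * tail_moment * weight_mass / Z ^ 3) * deviation f)
      = ennreal poincare_constant * ennreal (ball_mass * deviation f)"
    using ball_mass_pos dev_nonneg poincare_constant_pos by (simp only:) (intro ennreal_mult; simp)
  also have "\<dots> \<le> ennreal poincare_constant * energy f"
    by (intro mult_left_mono ball_mass_deviation_le_energy) simp
  finally show ?thesis using weighted_variance_le_deviation by (rule order_trans[rotated])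
qed

end

end

lemma Cb_inf_measurable_bounded:
  assumes "Cb_inf f"
  shows "f \<in> borel_measurable lebesgue" and "bounded (range f)"
proof -
  have "f differentiable_on UNIV" and bdd: "bounded (range f)"
    using assms iter_partials.base[of f] unfolding Cb_inf_def by auto
  hence "continuous_on UNIV f" by (intro differentiable_imp_continuous_on)
  thus "f \<in> borel_measurable lebesgue"
    by (simp add: borel_measurable_continuous_onI measurable_completion)
  show "bounded (range f)" by (rule bdd)
qed

text \<open>The weighted Poincare inequality rewritten for a density \<open>\<rho> = exp(-V)\<close>, in the form of
  the corollary: \<open>\<mu>\<^sub>2\<^sub>V\<close> is the mean under \<open>\<rho>\<^sup>2\<close> and \<open>e\<^sup>V e\<^sup>-\<^sup>2\<^sup>V = \<rho>\<close>.\<close>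
lemma (in poincare_density) poincare_for_potential:
  assumes \<rho>_exp: "\<And>x. \<rho> x = exp (- V x)" and f: "Cb_inf f"
  shows "(\<integral>\<^sup>+ x. ennreal ((f x - mu2V V f)\<^sup>2 * exp (V x) / (1 + norm x) powr D
        * (exp (- 2 * V x) / (\<integral>y. exp (- 2 * V y) \<partial>lebesgue))) \<partial>lebesgue)
    \<le> ennreal poincare_constant * (\<integral>\<^sup>+ x. (\<integral>\<^sup>+ y. ennreal ((f y - f x)\<^sup>2 / norm (y - x) powr D
        * exp (- V y)) \<partial>lebesgue) * ennreal (exp (- V x)) \<partial>lebesgue)"
    (is "?lhs \<le> _ * ?energy")
proof -
  have \<rho>_sq: "exp (- 2 * V x) = \<rho> x ^ 2" for x
    by (simp add: \<rho>_exp power2_eq_square exp_add[symmetric])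
  have mu: "mu2V V f = mean f" unfolding mu2V_def mean_def Z_def by (simp only: \<rho>_sq)
  have Z: "(\<integral>y. exp (- 2 * V y) \<partial>lebesgue) = Z" unfolding Z_def by (simp only: \<rho>_sq)
  have "(f x - mu2V V f)\<^sup>2 * exp (V x) / (1 + norm x) powr D * (exp (- 2 * V x) / (\<integral>y. exp (- 2 * V y) \<partial>lebesgue))
      = (f x - mean f)^2 * decay_weight x * \<rho> x / Z" for x
  proof -
    have "exp (V x) * exp (- 2 * V x) = \<rho> x" unfolding \<rho>_exp by (simp flip: exp_add)
    moreover have "(f x - mean f)\<^sup>2 * exp (V x) / (1 + norm x) powr D * (exp (- 2 * V x) / Z)
        = (f x - mean f)^2 * decay_weight x * (exp (V x) * exp (- 2 * V x)) / Z"
      unfolding decay_weight_def by (simp add: divide_inverse ac_simps)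
    ultimately show ?thesis unfolding mu Z by simp
  qed
  hence "?lhs = (\<integral>\<^sup>+ x. ennreal ((f x - mean f)^2 * decay_weight x * \<rho> x / Z) \<partial>lebesgue)"
    by simp
  moreover have "energy f = ?energy" unfolding energy_def by (simp only: \<rho>_exp)
  ultimately show ?thesis
    using weighted_poincare[OF Cb_inf_measurable_bounded[OF f]] by simp
qed

theorem corollary5p5:
  fixes V :: "'a::euclidean_space \<Rightarrow> real" and \<alpha> \<alpha>0 :: real
  assumes V_meas: "V \<in> borel_measurable lebesgue"
    and V_locbdd: "\<And>K. compact K \<Longrightarrow> bounded (V ` K)"
    and expV_bdd: "bounded (range (\<lambda>x. exp (- V x)))"
    and expV_int: "integrable lebesgue (\<lambda>x. exp (- V x))"
    and alpha: "0 < \<alpha>" "\<alpha> < 2"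
    and alpha0: "0 < \<alpha>0" "\<alpha>0 < min \<alpha> 1"
    and decay: "Limsup at_infinity (\<lambda>x::'a. ereal ((SUP z\<in>{z. norm z \<ge> norm x}. exp (- V z))
                   * norm x powr (real DIM('a) + \<alpha> - \<alpha>0))) = 0"
  shows "\<exists>C0>0. \<forall>f. Cb_inf f \<longrightarrow>
    (\<integral>\<^sup>+ x. ennreal ((f x - mu2V V f)\<^sup>2 * exp (V x) / (1 + norm x) powr (real DIM('a) + \<alpha>)
        * (exp (- 2 * V x) / (\<integral>y. exp (- 2 * V y) \<partial>lebesgue))) \<partial>lebesgue)
    \<le> ennreal C0 * (\<integral>\<^sup>+ x. (\<integral>\<^sup>+ y. ennreal ((f y - f x)\<^sup>2 / norm (y - x) powr (real DIM('a) + \<alpha>)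
        * exp (- V y)) \<partial>lebesgue) * ennreal (exp (- V x)) \<partial>lebesgue)"
proof -
  have "1 \<le> real DIM('a)" "\<alpha>0 < \<alpha>" "\<alpha>0 < 1" using DIM_positive[where 'a='a] alpha0 by auto
  hence D: "0 < real DIM('a) + \<alpha>" "real DIM('a) + \<alpha> \<le> 2 * (real DIM('a) + \<alpha> - \<alpha>0)"
    using alpha by argo+
  obtain M where M: "\<And>x. exp (- V x) \<le> M"
    using expV_bdd unfolding bounded_iff by (metis abs_le_D1 rangeI real_norm_def)
  have "\<exists>C. \<forall>x. exp (- V x) ^ 2 * (1 + norm x) powr (real DIM('a) + \<alpha>) \<le> C"
    using decay_imp_weighted_square_bounded[OF _ M _ D(2) decay] D(1) by simp
  moreover have "(\<lambda>x. exp (- V x)) \<in> borel_measurable lebesgue"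
    using V_meas by measurable
  ultimately interpret poincare_density "\<lambda>x. exp (- V x)" "real DIM('a) + \<alpha>"
    using M D(1) expV_int by unfold_locales auto
  show ?thesis using poincare_constant_pos poincare_for_potential[OF refl] by blast
qed

end
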